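(* Let $A,B$ be real $m\times n$ matrices with a simultaneous block structure, and let $b$ be the number of blocks. Let $P,Q$ be $m\times n$ matrices such that $P$ is binary and all entries of $Q$ lie in $[0,1]$. Then $$\|(A-B)\circ Q\|_{\bar F}\le\|(A-B)\circ P\|_{\bar F}+\sqrt{b\|P-Q\|_\Box}\,\|A-B\|_\infty.$$
   Context: A binary matrix has entries in $\{0,1\}$. $\circ$ is the entrywise product; $\|A\|_\infty=\max|a_{ij}|$; $\|A\|_{\bar F}=\big(\frac1{mn}\sum_{i,j}a_{ij}^2\big)^{1/2}$; $\|A\|_\Box=\frac1{mn}\max\{|x^TAy|:x\in\mathbb{R}^m,y\in\mathbb{R}^n,\|x\|_\infty\le1,\|y\|_\infty\le1\}$. A matrix is a block matrix if the rows are partitioned into consecutive intervals and the columns into consecutive intervals such that the matrix is constant on each product of a row interval and a column interval (the blocks); two matrices have a simultaneous block structure if both are block matrices for the same row and column partitions. *)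

theory Defs
  imports Complex_Main
begin

text \<open>Real m x n matrices are represented as functions nat => nat => real;
  only the entries with row index < m and column index < n are relevant.\<close>

definition sup_norm :: "nat \<Rightarrow> nat \<Rightarrow> (nat \<Rightarrow> nat \<Rightarrow> real) \<Rightarrow> real" where
  "sup_norm m n A = Max {\<bar>A i j\<bar> | i j. i < m \<and> j < n}"

definition nfrob_norm :: "nat \<Rightarrow> nat \<Rightarrow> (nat \<Rightarrow> nat \<Rightarrow> real) \<Rightarrow> real" where
  "nfrob_norm m n A = sqrt ((1 / (real m * real n)) * (\<Sum>i<m. \<Sum>j<n. (A i j)\<^sup>2))"

definition cut_norm :: "nat \<Rightarrow> nat \<Rightarrow> (nat \<Rightarrow> nat \<Rightarrow> real) \<Rightarrow> real" where
  "cut_norm m n A = (1 / (real m * real n)) *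
     Sup {\<bar>\<Sum>i<m. \<Sum>j<n. x i * A i j * y j\<bar> | x y.
            (\<forall>i<m. \<bar>x i\<bar> \<le> 1) \<and> (\<forall>j<n. \<bar>y j\<bar> \<le> 1)}"

definition hadamard :: "(nat \<Rightarrow> nat \<Rightarrow> real) \<Rightarrow> (nat \<Rightarrow> nat \<Rightarrow> real) \<Rightarrow> nat \<Rightarrow> nat \<Rightarrow> real" where
  "hadamard A B = (\<lambda>i j. A i j * B i j)"

text \<open>A partition of {0..<m} into consecutive nonempty intervals, given by the
  strictly increasing list of cut points 0 = r_0 < r_1 < ... < r_p = m;
  the intervals are {r_k..<r_(k+1)} for k < p = length rs - 1.\<close>

definition interval_partition :: "nat \<Rightarrow> nat list \<Rightarrow> bool" where
  "interval_partition m rs \<longleftrightarrow> rs \<noteq> [] \<and> sorted_wrt (<) rs \<and> hd rs = 0 \<and> last rs = m"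

definition is_block_matrix :: "nat list \<Rightarrow> nat list \<Rightarrow> (nat \<Rightarrow> nat \<Rightarrow> real) \<Rightarrow> bool" where
  "is_block_matrix rs cs A \<longleftrightarrow>
     (\<forall>k < length rs - 1. \<forall>l < length cs - 1.
        \<forall>i \<in> {rs ! k ..< rs ! Suc k}. \<forall>i' \<in> {rs ! k ..< rs ! Suc k}.
        \<forall>j \<in> {cs ! l ..< cs ! Suc l}. \<forall>j' \<in> {cs ! l ..< cs ! Suc l}.
          A i j = A i' j')"

end

theory Submission
  imports Defs
begin

text \<open>For binary \<open>p\<close> and \<open>0 \<le> q \<le> 1\<close> one has \<open>p\<^sup>2 = p\<close> and \<open>q\<^sup>2 \<le> q\<close>, so entrywise
  \<open>(d q)\<^sup>2 \<le> (d p)\<^sup>2 + d\<^sup>2 (q - p)\<close>. Summing, the excess of the left-hand side is the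
  inner product of \<open>(A - B)\<^sup>2\<close>, a block matrix with \<open>b\<close> blocks, with \<open>Q - P\<close>. On each
  block \<open>(A - B)\<^sup>2\<close> is a constant of size at most \<open>\<parallel>A - B\<parallel>\<^sub>\<infinity>\<^sup>2\<close>, and the sum of \<open>Q - P\<close>
  over a rectangle is at most \<open>mn \<parallel>P - Q\<parallel>\<^sub>\<box>\<close>. Taking square roots, \<open>\<surd>(x + y) \<le> \<surd>x + \<surd>y\<close>
  gives the claim.\<close>

lemma sum_sorted_cuts:
  fixes f :: "nat \<Rightarrow> 'a::comm_monoid_add"
  assumes "sorted rs" and "p < length rs"
  shows "(\<Sum>k<p. sum f {rs!k..<rs!Suc k}) = sum f {rs!0..<rs!p}"
  using assms(2)
proof (induction p)
  case 0
  then show ?case by simp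
next
  case (Suc p)
  have "rs!0 \<le> rs!p" "rs!p \<le> rs!Suc p"
    using assms(1) Suc.prems by (auto intro: sorted_nth_mono)
  then show ?case
    using Suc by (simp add: sum.atLeastLessThan_concat)
qed

lemma sum_interval_partition:
  fixes f :: "nat \<Rightarrow> 'a::comm_monoid_add"
  assumes "interval_partition m rs"
  shows "(\<Sum>k<length rs - 1. sum f {rs!k..<rs!Suc k}) = sum f {..<m}"
proof -
  have "rs \<noteq> []" "sorted rs" "rs!0 = 0" "rs!(length rs - 1) = m"
    using assms by (auto simp: interval_partition_def hd_conv_nth last_conv_nth
        strict_sorted_imp_sorted)
  then show ?thesis
    using sum_sorted_cuts[of rs "length rs - 1" f] by (simp add: atLeast0LessThan)
qed

lemma interval_partition_block:
  assumes "interval_partition m rs" and "k < length rs - 1"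
  shows "rs!k < rs!Suc k" and "{rs!k..<rs!Suc k} \<subseteq> {..<m}"
proof -
  have rs: "rs \<noteq> []" "sorted_wrt (<) rs" "last rs = m"
    using assms(1) by (auto simp: interval_partition_def)
  then show "rs!k < rs!Suc k"
    using assms(2) by (auto simp: sorted_wrt_iff_nth_less)
  have "rs!Suc k \<le> m"
    using rs assms(2) by (cases "Suc k = length rs - 1")
      (auto simp: last_conv_nth sorted_wrt_iff_nth_less intro: less_imp_le)
  then show "{rs!k..<rs!Suc k} \<subseteq> {..<m}" by auto
qed

lemma is_block_matrix_combine:
  assumes "is_block_matrix rs cs A" and "is_block_matrix rs cs B"
  shows "is_block_matrix rs cs (\<lambda>i j. f (A i j) (B i j))"
  using assms unfolding is_block_matrix_def by metis

lemma abs_le_sup_norm: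
  assumes "i < m" and "j < n"
  shows "\<bar>M i j\<bar> \<le> sup_norm m n M"
proof -
  have "{\<bar>M i j\<bar> | i j. i < m \<and> j < n} = (\<lambda>(i, j). \<bar>M i j\<bar>) ` ({..<m} \<times> {..<n})"
    by auto
  then show ?thesis
    unfolding sup_norm_def using assms by (intro Max_ge) auto
qed

lemma cut_norm_set_bdd_above:
  fixes m n :: nat and M :: "nat \<Rightarrow> nat \<Rightarrow> real"
  shows "bdd_above {\<bar>\<Sum>i<m. \<Sum>j<n. x i * M i j * y j\<bar> | x y.
     (\<forall>i<m. \<bar>x i\<bar> \<le> 1) \<and> (\<forall>j<n. \<bar>y j\<bar> \<le> 1)}"
proof (rule bdd_aboveI, safe)
  fix x y :: "nat \<Rightarrow> real"
  assume x: "\<forall>i<m. \<bar>x i\<bar> \<le> 1" and y: "\<forall>j<n. \<bar>y j\<bar> \<le> 1"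
  have "\<bar>\<Sum>i<m. \<Sum>j<n. x i * M i j * y j\<bar> \<le> (\<Sum>i<m. \<Sum>j<n. \<bar>x i * M i j * y j\<bar>)"
    by (rule order.trans[OF sum_abs]) (intro sum_mono sum_abs)
  also have "\<dots> \<le> (\<Sum>i<m. \<Sum>j<n. \<bar>M i j\<bar>)"
  proof (intro sum_mono)
    fix i j assume "i \<in> {..<m}" "j \<in> {..<n}"
    then have "\<bar>x i\<bar> * \<bar>M i j\<bar> * \<bar>y j\<bar> \<le> 1 * \<bar>M i j\<bar> * 1"
      using x y by (intro mult_mono) auto
    then show "\<bar>x i * M i j * y j\<bar> \<le> \<bar>M i j\<bar>" by (simp add: abs_mult)
  qed
  finally show "\<bar>\<Sum>i<m. \<Sum>j<n. x i * M i j * y j\<bar> \<le> (\<Sum>i<m. \<Sum>j<n. \<bar>M i j\<bar>)" .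
qed

text \<open>Testing the cut norm with the indicator vectors of \<open>R\<close> and \<open>C\<close>.\<close>

lemma abs_sum_rectangle_le_cut_norm:
  assumes "R \<subseteq> {..<m}" and "C \<subseteq> {..<n}"
  shows "\<bar>\<Sum>i\<in>R. \<Sum>j\<in>C. M i j\<bar> \<le> real m * real n * cut_norm m n M"
proof (cases "m = 0 \<or> n = 0")
  case True
  then have "R = {} \<or> C = {}" using assms by auto
  then show ?thesis unfolding cut_norm_def using True by auto
next
  case False
  define x where "x i = (if i \<in> R then 1 else 0 :: real)" for i
  define y where "y j = (if j \<in> C then 1 else 0 :: real)" for j
  have "(\<Sum>i\<in>R. \<Sum>j\<in>C. M i j) = (\<Sum>i<m. \<Sum>j<n. x i * M i j * y j)"
    unfolding x_def y_def using assms
    by (intro sum.mono_neutral_cong_left) (auto intro!: sum.mono_neutral_cong_left)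
  then have "\<bar>\<Sum>i\<in>R. \<Sum>j\<in>C. M i j\<bar> \<in> {\<bar>\<Sum>i<m. \<Sum>j<n. x i * M i j * y j\<bar> | x y.
     (\<forall>i<m. \<bar>x i\<bar> \<le> 1) \<and> (\<forall>j<n. \<bar>y j\<bar> \<le> 1)}"
    by (intro CollectI exI[of _ x] exI[of _ y]) (simp add: x_def y_def)
  then show ?thesis
    using False cSup_upper[OF _ cut_norm_set_bdd_above] by (simp add: cut_norm_def)
qed

lemma cut_norm_nonneg: "0 \<le> cut_norm m n M"
proof (cases "m = 0 \<or> n = 0")
  case False
  then have "0 < real m * real n" by simp
  moreover have "0 \<le> real m * real n * cut_norm m n M"
    using abs_sum_rectangle_le_cut_norm[of "{}" m "{}" n M] by simp
  ultimately show ?thesis by (simp add: zero_le_mult_iff)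
qed (auto simp: cut_norm_def)

lemma abs_sum_block_matrix_mult_le:
  assumes rs: "interval_partition m rs" and cs: "interval_partition n cs"
    and D: "is_block_matrix rs cs D" and D_bound: "\<forall>i<m. \<forall>j<n. \<bar>D i j\<bar> \<le> S"
  shows "\<bar>\<Sum>i<m. \<Sum>j<n. D i j * E i j\<bar>
    \<le> real ((length rs - 1) * (length cs - 1)) * S * (real m * real n * cut_norm m n E)"
proof -
  define p where "p = length rs - 1"
  define q where "q = length cs - 1"
  define row where "row k = {rs!k..<rs!Suc k}" for k
  define col where "col l = {cs!l..<cs!Suc l}" for l
  have block_sum_le: "\<bar>\<Sum>i\<in>row k. \<Sum>j\<in>col l. D i j * E i j\<bar> \<le> S * (real m * real n * cut_norm m n E)"
    if k: "k < p" and l: "l < q" for k l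
  proof -
    have corner: "rs!k \<in> row k" "cs!l \<in> col l"
      using interval_partition_block(1)[OF rs] interval_partition_block(1)[OF cs] k l
      by (auto simp: row_def col_def p_def q_def)
    have subset: "row k \<subseteq> {..<m}" "col l \<subseteq> {..<n}"
      using interval_partition_block(2)[OF rs] interval_partition_block(2)[OF cs] k l
      by (auto simp: row_def col_def p_def q_def)
    have corner_bound: "\<bar>D (rs!k) (cs!l)\<bar> \<le> S"
      using D_bound corner subset by blast
    have "D i j = D (rs!k) (cs!l)" if "i \<in> row k" "j \<in> col l" for i j
      using D k l corner that unfolding is_block_matrix_def row_def col_def p_def q_def by blast
    then have "(\<Sum>i\<in>row k. \<Sum>j\<in>col l. D i j * E i j)
        = D (rs!k) (cs!l) * (\<Sum>i\<in>row k. \<Sum>j\<in>col l. E i j)"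
      by (simp add: sum_distrib_left)
    also have "\<bar>\<dots>\<bar> \<le> S * (real m * real n * cut_norm m n E)"
      unfolding abs_mult using corner_bound subset order.trans[OF abs_ge_zero corner_bound]
      by (intro mult_mono abs_sum_rectangle_le_cut_norm) auto
    finally show ?thesis .
  qed
  have "(\<Sum>i<m. \<Sum>j<n. D i j * E i j) = (\<Sum>k<p. \<Sum>i\<in>row k. \<Sum>l<q. \<Sum>j\<in>col l. D i j * E i j)"
    unfolding row_def col_def p_def q_def sum_interval_partition[OF rs] sum_interval_partition[OF cs] ..
  also have "\<dots> = (\<Sum>k<p. \<Sum>l<q. \<Sum>i\<in>row k. \<Sum>j\<in>col l. D i j * E i j)"
    by (intro sum.cong refl sum.swap)
  finally have "\<bar>\<Sum>i<m. \<Sum>j<n. D i j * E i j\<bar>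
      \<le> (\<Sum>k<p. \<Sum>l<q. \<bar>\<Sum>i\<in>row k. \<Sum>j\<in>col l. D i j * E i j\<bar>)"
    by (simp add: order.trans[OF sum_abs] sum_mono sum_abs)
  also have "\<dots> \<le> (\<Sum>k<p. \<Sum>l<q. S * (real m * real n * cut_norm m n E))"
    using block_sum_le by (intro sum_mono) auto
  finally show ?thesis by (simp add: p_def q_def)
qed

lemma power2_mult_le_binary_add:
  fixes d p q :: real
  assumes "p = 0 \<or> p = 1" and "0 \<le> q" and "q \<le> 1"
  shows "(d * q)\<^sup>2 \<le> (d * p)\<^sup>2 + d\<^sup>2 * (q - p)"
proof -
  have "q\<^sup>2 \<le> q" using assms(2,3) by (simp add: power2_eq_square mult_left_le)
  then have "d\<^sup>2 * q\<^sup>2 \<le> d\<^sup>2 * q" by (simp add: mult_left_mono)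
  then show ?thesis using assms(1) by (auto simp: power_mult_distrib algebra_simps)
qed

lemma nfrob_norm_le_add_sqrt:
  assumes "(\<Sum>i<m. \<Sum>j<n. (X i j)\<^sup>2) \<le> (\<Sum>i<m. \<Sum>j<n. (Y i j)\<^sup>2) + real m * real n * c"
    and "0 \<le> c"
  shows "nfrob_norm m n X \<le> nfrob_norm m n Y + sqrt c"
proof (cases "m = 0 \<or> n = 0")
  case True
  then show ?thesis using assms(2) by (auto simp: nfrob_norm_def)
next
  case False
  define N where "N = real m * real n"
  have "N > 0" using False by (simp add: N_def)
  then have "(1 / N) * (\<Sum>i<m. \<Sum>j<n. (X i j)\<^sup>2) \<le> (1 / N) * (\<Sum>i<m. \<Sum>j<n. (Y i j)\<^sup>2) + c"
    using assms(1) by (simp add: N_def field_simps)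
  then have "nfrob_norm m n X \<le> sqrt ((1 / N) * (\<Sum>i<m. \<Sum>j<n. (Y i j)\<^sup>2) + c)"
    by (simp add: nfrob_norm_def N_def)
  also have "\<dots> \<le> nfrob_norm m n Y + sqrt c"
    unfolding nfrob_norm_def N_def[symmetric]
    using \<open>N > 0\<close> assms(2) by (intro sqrt_add_le_add_sqrt) (auto intro!: divide_nonneg_pos sum_nonneg)
  finally show ?thesis .
qed

theorem lemma7p3:
  fixes m n :: nat and rs cs :: "nat list" and A B P Q :: "nat \<Rightarrow> nat \<Rightarrow> real" and b :: nat
  assumes "0 < m" and "0 < n"
    and "interval_partition m rs" and "interval_partition n cs"
    and "is_block_matrix rs cs A" and "is_block_matrix rs cs B"
    and "b = (length rs - 1) * (length cs - 1)"
    and "\<forall>i<m. \<forall>j<n. P i j = 0 \<or> P i j = 1"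
    and "\<forall>i<m. \<forall>j<n. 0 \<le> Q i j \<and> Q i j \<le> 1"
  shows "nfrob_norm m n (hadamard (\<lambda>i j. A i j - B i j) Q)
     \<le> nfrob_norm m n (hadamard (\<lambda>i j. A i j - B i j) P)
       + sqrt (real b * cut_norm m n (\<lambda>i j. P i j - Q i j)) * sup_norm m n (\<lambda>i j. A i j - B i j)"
proof -
  define D where "D = (\<lambda>i j. A i j - B i j)"
  define S where "S = sup_norm m n D"
  define c where "c = cut_norm m n (\<lambda>i j. P i j - Q i j)"
  have S_nonneg: "0 \<le> S"
    using abs_le_sup_norm[of 0 m 0 n D] assms(1,2) by (simp add: S_def order.trans[OF abs_ge_zero])
  have "(D i j)\<^sup>2 \<le> S\<^sup>2" if "i < m" "j < n" for i j
    using power_mono[OF abs_le_sup_norm[OF that] abs_ge_zero, of D 2] by (simp add: S_def)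
  then have D_sq_bound: "\<forall>i<m. \<forall>j<n. \<bar>(D i j)\<^sup>2\<bar> \<le> S\<^sup>2"
    by simp
  have D_sq_block: "is_block_matrix rs cs (\<lambda>i j. (D i j)\<^sup>2)"
    unfolding D_def by (rule is_block_matrix_combine[OF assms(5,6)])
  have "(\<Sum>i<m. \<Sum>j<n. (D i j * Q i j)\<^sup>2)
      \<le> (\<Sum>i<m. \<Sum>j<n. (D i j * P i j)\<^sup>2) + (\<Sum>i<m. \<Sum>j<n. (D i j)\<^sup>2 * (Q i j - P i j))"
    using assms(8,9) by (simp flip: sum.distrib) (intro sum_mono power2_mult_le_binary_add; simp)
  also have "(\<Sum>i<m. \<Sum>j<n. (D i j)\<^sup>2 * (Q i j - P i j))
      = - (\<Sum>i<m. \<Sum>j<n. (D i j)\<^sup>2 * (P i j - Q i j))"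
    by (simp add: algebra_simps flip: sum_negf)
  also have "\<dots> \<le> \<bar>\<Sum>i<m. \<Sum>j<n. (D i j)\<^sup>2 * (P i j - Q i j)\<bar>"
    by (rule abs_ge_minus_self)
  also have "\<dots> \<le> real m * real n * (real b * c * S\<^sup>2)"
    using abs_sum_block_matrix_mult_le[OF assms(3,4) D_sq_block D_sq_bound,
        where E = "\<lambda>i j. P i j - Q i j"]
    unfolding assms(7) c_def by (simp add: ac_simps)
  finally have "nfrob_norm m n (hadamard D Q) \<le> nfrob_norm m n (hadamard D P) + sqrt (real b * c * S\<^sup>2)"
    unfolding hadamard_def using S_nonneg cut_norm_nonneg
    by (intro nfrob_norm_le_add_sqrt) (simp_all add: c_def)
  then show ?thesis
    using S_nonneg by (simp add: D_def S_def c_def real_sqrt_mult)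
qed

end
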